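(* Suppose Assumptions A1 and A2 hold, the state space $\mathsf X$ is a finite set (with the discrete topology), and $\hat g$ and the numbers $\int\phi(x,y,\eta)\nu(d\eta)$ ($x,y\in\mathsf X$) are finite. Then Assumption A3 holds for every $p\ge1$, and $\mathcal L_\Phi^p=\mathcal L_\Phi$ for all $p\ge1$. In particular, statements (b)–(e) below hold for every $p\ge1$ if and only if $\mathcal L_\Phi<0$: (b) a Markov solution exists in $\mathcal H_p$; (c) a unique Markov solution exists in $\mathcal H_p$; (d) there is $h\in\mathcal H_p$ such that $T^nh$ converges in $L_p(\pi)$ to a limit in $\mathcal H_p$; (e) a unique Markov solution $h^*$ exists in $\mathcal H_p$ and $T^nh\to h^*$ for every $h\in\mathcal H_p$.
   Context: Standing setting: $\mathsf X$ and $\mathsf W$ are separable, completely metrizable topological spaces with their Borel $\sigma$-algebras. $\{X_t\}_{t\ge0}$ is a stationary Markov process on $\mathsf X$ with transition kernel $\Pi$ and stationary marginal $\pi$; $\Pi^n$ is the $n$-step kernel. $\{\eta_t\}$ is iid with law $\nu$, independent of $\{X_t\}$. $\phi,g:\mathsf X\times\mathsf X\times\mathsf W\to[0,\infty)$ are Borel and $\Phi_{t+1}=\phi(X_t,X_{t+1},\eta_{t+1})$, $G_{t+1}=g(X_t,X_{t+1},\eta_{t+1})$. $\mathbb E_x$ conditions on $X_0=x$; $\mathbb E$ is unconditional. $L_p(\pi)$ ($p\ge1$) is the Banach lattice of functions $h:\mathsf X\to\mathbb R$ with $\int|h|^pd\pi<\infty$ modulo $\pi$-null sets; $\mathcal H_p$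 its nonnegative elements. $Vh(x)=\int h(y)[\int\phi(x,y,\eta)\nu(d\eta)]\Pi(x,dy)$, $\hat g(x)=\int\int\phi g\,d\nu\,\Pi(x,dy)$, $Th=Vh+\hat g$. A Markov solution in $\mathcal H_p$ is $h\in\mathcal H_p$ with $h=Th$. A1: $\phi>0$ everywhere and $G_t>0$ with positive probability. A2: for every Borel $B$ with $\pi(B)>0$ and every $x$ there is $n$ with $\Pi^n(x,B)>0$. A3 (for a given $p\ge1$): $\hat g\in\mathcal H_p$ and $V$ maps $L_p(\pi)$ into itself and some power $V^i$ is compact on $L_p(\pi)$. $\mathcal L_\Phi^p:=\lim_{n}\frac{1}{np}\ln\int(\mathbb E_x\prod_{t=1}^n\Phi_t)^p\pi(dx)$ and $\mathcal L_\Phi:=\mathcal L_\Phi^1=\lim_n\frac1n\ln\mathbb E\prod_{t=1}^n\Phi_t$. *)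

theory Defs
  imports "HOL-Probability.Probability"
begin

text \<open>Finite state space: a type of class finite (discrete topology / sigma-algebra).
  The transition kernel is a stochastic matrix P, the stationary marginal a
  probability vector mu; the noise law is a measure nu on a Polish space.\<close>

definition piM :: "('x \<Rightarrow> real) \<Rightarrow> 'x measure" where
  "piM mu = point_measure UNIV (\<lambda>x. ennreal (mu x))"

primrec Ppow :: "('x::finite \<Rightarrow> 'x \<Rightarrow> real) \<Rightarrow> nat \<Rightarrow> 'x \<Rightarrow> 'x \<Rightarrow> real" where
  "Ppow P 0 x y = (if x = y then 1 else 0)"
| "Ppow P (Suc n) x y = (\<Sum>z\<in>UNIV. P x z * Ppow P n z y)"

definition Lp_mem :: "('x \<Rightarrow> real) \<Rightarrow> real \<Rightarrow> ('x \<Rightarrow> real) \<Rightarrow> bool" where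
  "Lp_mem mu p h \<longleftrightarrow> h \<in> borel_measurable (piM mu) \<and> integrable (piM mu) (\<lambda>x. \<bar>h x\<bar> powr p)"

definition Hp_mem :: "('x \<Rightarrow> real) \<Rightarrow> real \<Rightarrow> ('x \<Rightarrow> real) \<Rightarrow> bool" where
  "Hp_mem mu p h \<longleftrightarrow> Lp_mem mu p h \<and> (AE x in piM mu. h x \<ge> 0)"

definition Lp_norm :: "('x \<Rightarrow> real) \<Rightarrow> real \<Rightarrow> ('x \<Rightarrow> real) \<Rightarrow> real" where
  "Lp_norm mu p h = (\<integral>x. \<bar>h x\<bar> powr p \<partial>piM mu) powr (1 / p)"

definition ae_eq :: "('x \<Rightarrow> real) \<Rightarrow> ('x \<Rightarrow> real) \<Rightarrow> ('x \<Rightarrow> real) \<Rightarrow> bool" where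
  "ae_eq mu h h' \<longleftrightarrow> (AE x in piM mu. h x = h' x)"

definition Lp_tendsto :: "('x \<Rightarrow> real) \<Rightarrow> real \<Rightarrow> (nat \<Rightarrow> 'x \<Rightarrow> real) \<Rightarrow> ('x \<Rightarrow> real) \<Rightarrow> bool" where
  "Lp_tendsto mu p s h \<longleftrightarrow> ((\<lambda>n. Lp_norm mu p (\<lambda>x. s n x - h x)) \<longlonglongrightarrow> 0)"

text \<open>Compact operator on L_p(mu): every L_p-bounded sequence has a subsequence whose
  image is Cauchy (hence convergent, L_p being complete) in L_p(mu).\<close>
definition compact_op :: "('x \<Rightarrow> real) \<Rightarrow> real \<Rightarrow> (('x \<Rightarrow> real) \<Rightarrow> ('x \<Rightarrow> real)) \<Rightarrow> bool" where
  "compact_op mu p A \<longleftrightarrow>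
     (\<forall>s. (\<forall>n. Lp_mem mu p (s n)) \<and> bounded (range (\<lambda>n. Lp_norm mu p (s n))) \<longrightarrow>
        (\<exists>r::nat \<Rightarrow> nat. strict_mono r \<and>
           (\<forall>e>0. \<exists>N::nat. \<forall>m\<ge>N. \<forall>n\<ge>N. Lp_norm mu p (\<lambda>x. A (s (r m)) x - A (s (r n)) x) < e)))"

definition phibar :: "('x \<Rightarrow> 'x \<Rightarrow> 'w \<Rightarrow> real) \<Rightarrow> 'w measure \<Rightarrow> 'x \<Rightarrow> 'x \<Rightarrow> real" where
  "phibar phi nu x y = (\<integral>\<eta>. phi x y \<eta> \<partial>nu)"

definition Vop :: "('x::finite \<Rightarrow> 'x \<Rightarrow> real) \<Rightarrow> ('x \<Rightarrow> 'x \<Rightarrow> 'w \<Rightarrow> real) \<Rightarrow> 'w measure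
    \<Rightarrow> ('x \<Rightarrow> real) \<Rightarrow> 'x \<Rightarrow> real" where
  "Vop P phi nu h x = (\<Sum>y\<in>UNIV. h y * phibar phi nu x y * P x y)"

definition ghat :: "('x::finite \<Rightarrow> 'x \<Rightarrow> real) \<Rightarrow> ('x \<Rightarrow> 'x \<Rightarrow> 'w \<Rightarrow> real) \<Rightarrow> ('x \<Rightarrow> 'x \<Rightarrow> 'w \<Rightarrow> real)
    \<Rightarrow> 'w measure \<Rightarrow> 'x \<Rightarrow> real" where
  "ghat P phi g nu x = (\<Sum>y\<in>UNIV. (\<integral>\<eta>. phi x y \<eta> * g x y \<eta> \<partial>nu) * P x y)"

definition Top :: "('x::finite \<Rightarrow> 'x \<Rightarrow> real) \<Rightarrow> ('x \<Rightarrow> 'x \<Rightarrow> 'w \<Rightarrow> real) \<Rightarrow> ('x \<Rightarrow> 'x \<Rightarrow> 'w \<Rightarrow> real)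
    \<Rightarrow> 'w measure \<Rightarrow> ('x \<Rightarrow> real) \<Rightarrow> 'x \<Rightarrow> real" where
  "Top P phi g nu h x = Vop P phi nu h x + ghat P phi g nu x"

definition Markov_sol :: "('x \<Rightarrow> real) \<Rightarrow> real \<Rightarrow> (('x \<Rightarrow> real) \<Rightarrow> ('x \<Rightarrow> real)) \<Rightarrow> ('x \<Rightarrow> real) \<Rightarrow> bool" where
  "Markov_sol mu p T h \<longleftrightarrow> Hp_mem mu p h \<and> ae_eq mu h (T h)"

definition A1 :: "('x::finite \<Rightarrow> 'x \<Rightarrow> real) \<Rightarrow> ('x \<Rightarrow> real) \<Rightarrow> ('x \<Rightarrow> 'x \<Rightarrow> 'w \<Rightarrow> real)
    \<Rightarrow> ('x \<Rightarrow> 'x \<Rightarrow> 'w \<Rightarrow> real) \<Rightarrow> 'w measure \<Rightarrow> bool" where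
  "A1 P mu phi g nu \<longleftrightarrow> (\<forall>x y \<eta>. phi x y \<eta> > 0) \<and>
     (\<Sum>x\<in>UNIV. \<Sum>y\<in>UNIV. mu x * P x y * measure nu {\<eta> \<in> space nu. g x y \<eta> > 0}) > 0"

definition A2 :: "('x::finite \<Rightarrow> 'x \<Rightarrow> real) \<Rightarrow> ('x \<Rightarrow> real) \<Rightarrow> bool" where
  "A2 P mu \<longleftrightarrow> (\<forall>B. (\<Sum>x\<in>B. mu x) > 0 \<longrightarrow> (\<forall>x. \<exists>n. (\<Sum>y\<in>B. Ppow P n x y) > 0))"

definition A3 :: "('x \<Rightarrow> real) \<Rightarrow> real \<Rightarrow> (('x \<Rightarrow> real) \<Rightarrow> ('x \<Rightarrow> real)) \<Rightarrow> ('x \<Rightarrow> real) \<Rightarrow> bool" where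
  "A3 mu p V gh \<longleftrightarrow> Hp_mem mu p gh \<and> (\<forall>h. Lp_mem mu p h \<longrightarrow> Lp_mem mu p (V h))
     \<and> (\<exists>i\<ge>1. compact_op mu p (V ^^ i))"

text \<open>E_x prod_{t=1}^n Phi_t, computed with respect to the joint law of
  (X_1,...,X_n, eta_1,...,eta_n) given X_0 = x: the chain path has probability
  prod P(x_{t-1},x_t), and (eta_1..eta_n) is independent with law nu^n.\<close>
definition Ex_prod :: "('x::finite \<Rightarrow> 'x \<Rightarrow> real) \<Rightarrow> ('x \<Rightarrow> 'x \<Rightarrow> 'w \<Rightarrow> real) \<Rightarrow> 'w measure
    \<Rightarrow> 'x \<Rightarrow> nat \<Rightarrow> real" where
  "Ex_prod P phi nu x n =
     (\<Sum>xs\<in>PiE {1..n} (\<lambda>_. UNIV). let xs' = xs(0 := x) in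
        (\<Prod>t\<in>{1..n}. P (xs' (t - 1)) (xs' t)) *
        (\<integral>\<eta>s. (\<Prod>t\<in>{1..n}. phi (xs' (t - 1)) (xs' t) (\<eta>s t)) \<partial>PiM {1..n} (\<lambda>_. nu)))"

definition L_seq :: "('x::finite \<Rightarrow> 'x \<Rightarrow> real) \<Rightarrow> ('x \<Rightarrow> real) \<Rightarrow> ('x \<Rightarrow> 'x \<Rightarrow> 'w \<Rightarrow> real)
    \<Rightarrow> 'w measure \<Rightarrow> nat \<Rightarrow> real" where
  "L_seq P mu phi nu n = (1 / real n) * ln (\<Sum>x\<in>UNIV. mu x * Ex_prod P phi nu x n)"

definition Lp_seq :: "('x::finite \<Rightarrow> 'x \<Rightarrow> real) \<Rightarrow> ('x \<Rightarrow> real) \<Rightarrow> ('x \<Rightarrow> 'x \<Rightarrow> 'w \<Rightarrow> real)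
    \<Rightarrow> 'w measure \<Rightarrow> real \<Rightarrow> nat \<Rightarrow> real" where
  "Lp_seq P mu phi nu p n =
     (1 / (real n * p)) * ln (\<integral>x. (Ex_prod P phi nu x n) powr p \<partial>piM mu)"

end

theory Submission
  imports Defs
begin

text \<open>On the states charged by pi, the mean kernel M(x, y) = Pi(x, y) * int phi(x, y, .) dnu
  is a nonnegative matrix that is irreducible by A2, so it has a Perron root r > 0 with
  strictly positive right and left eigenvectors v and w (obtained from Brouwer's fixed
  point theorem). Since E_x prod Phi_t = (M^n 1)(x) lies between two constant multiples
  of r^n v(x), both L_Phi and L_Phi^p equal ln r. If r < 1, then M^n tends to 0 and every
  orbit of T h = M h + g-hat converges to the unique fixed point. If r \<ge> 1, pairing with
  w gives w . T^n h \<ge> n (w . g-hat), which is unbounded because w . g-hat > 0 by A1; so no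
  orbit converges and there is no fixed point. On a finite support every function lies in
  L_p and every operator is compact, which gives A3.\<close>

section \<open>Function spaces over a probability vector\<close>

lemma measurable_piM: "(h :: 'x::finite \<Rightarrow> real) \<in> borel_measurable (piM mu)"
  unfolding piM_def by (simp add: measurable_def space_point_measure sets_point_measure)

lemma AE_piM_iff: "(AE x in piM mu. Q x) \<longleftrightarrow> (\<forall>x. 0 < mu x \<longrightarrow> Q x)"
  unfolding piM_def AE_point_measure by auto

lemma integral_piM:
  fixes mu :: "'x::finite \<Rightarrow> real"
  assumes "\<And>x. 0 \<le> mu x"
  shows "(\<integral>x. f x \<partial>piM mu) = (\<Sum>x\<in>UNIV. mu x * (f x :: real))"
  unfolding piM_def using assms by (subst lebesgue_integral_point_measure_finite) auto

lemma integrable_piM: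
  assumes "\<And>x. 0 \<le> mu x"
  shows "integrable (piM mu) (f :: 'x::finite \<Rightarrow> real)"
proof (rule integrableI_bounded)
  show "f \<in> borel_measurable (piM mu)" by (rule measurable_piM)
  show "(\<integral>\<^sup>+ x. ennreal (norm (f x)) \<partial>piM mu) < \<infinity>"
    unfolding piM_def by (subst nn_integral_point_measure_finite) (auto simp: ennreal_mult_less_top)
qed

lemma pointwise_convergent_subseq:
  fixes s :: "nat \<Rightarrow> 'x::finite \<Rightarrow> real"
  assumes "\<And>n x. \<bar>s n x\<bar> \<le> C"
  shows "\<exists>r l. strict_mono r \<and> (\<forall>x. (\<lambda>n. s (r n) x) \<longlonglongrightarrow> l x)"
proof -
  have "norm (vec_lambda (s n)) \<le> CARD('x) * C" for n
  proof -
    have "norm (vec_lambda (s n)) \<le> (\<Sum>x\<in>UNIV. \<bar>s n x\<bar>)"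
      using norm_le_l1_cart[of "vec_lambda (s n)"] by simp
    also have "\<dots> \<le> CARD('x) * C" using sum_bounded_above[of UNIV "\<lambda>x. \<bar>s n x\<bar>" C] assms by simp
    finally show ?thesis .
  qed
  then have "bounded (range (\<lambda>n. vec_lambda (s n)))" by (auto simp: bounded_iff)
  then obtain l r where "strict_mono r" and "((\<lambda>n. vec_lambda (s n)) \<circ> r) \<longlonglongrightarrow> l"
    using bounded_imp_convergent_subsequence by blast
  then show ?thesis
    by (intro exI[of _ r] exI[of _ "vec_nth l"]) (auto dest: tendsto_vec_nth simp: o_def)
qed

locale prob_vector =
  fixes mu :: "'x::finite \<Rightarrow> real"
  assumes mu_nonneg: "\<And>x. 0 \<le> mu x"
    and mu_sum: "(\<Sum>x\<in>UNIV. mu x) = 1"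
begin

definition supp :: "'x set" where
  "supp = {x. 0 < mu x}"

lemma sum_weighted_supp: "(\<Sum>x\<in>UNIV. mu x * f x) = (\<Sum>x\<in>supp. mu x * f x)"
  by (rule sum.mono_neutral_right) (use mu_nonneg in \<open>auto simp: supp_def order_less_le\<close>)

lemma sum_supp: "(\<Sum>x\<in>supp. mu x) = 1"
  using sum_weighted_supp[of "\<lambda>_. 1"] mu_sum by simp

lemma supp_nonempty: "supp \<noteq> {}"
  using sum_supp by auto

lemma Lp_mem_finite: "Lp_mem mu p h"
  unfolding Lp_mem_def by (simp add: measurable_piM integrable_piM mu_nonneg)

lemma Hp_mem_iff: "Hp_mem mu p h \<longleftrightarrow> (\<forall>x\<in>supp. 0 \<le> h x)"
  unfolding Hp_mem_def by (simp add: Lp_mem_finite AE_piM_iff supp_def)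

lemma ae_eq_iff: "ae_eq mu h h' \<longleftrightarrow> (\<forall>x\<in>supp. h x = h' x)"
  unfolding ae_eq_def by (simp add: AE_piM_iff supp_def)

lemma Lp_norm_eq_sum: "Lp_norm mu p h = (\<Sum>x\<in>supp. mu x * \<bar>h x\<bar> powr p) powr (1/p)"
  unfolding Lp_norm_def by (simp add: integral_piM mu_nonneg sum_weighted_supp)

lemma Lp_norm_less:
  assumes "0 < p" and "0 < e" and "\<forall>x\<in>supp. \<bar>d x\<bar> < e"
  shows "Lp_norm mu p d < e"
proof -
  have "(\<Sum>x\<in>supp. mu x * \<bar>d x\<bar> powr p) < (\<Sum>x\<in>supp. mu x * e powr p)"
  proof (rule sum_strict_mono)
    fix x assume "x \<in> supp"
    then have "0 < mu x" and "\<bar>d x\<bar> powr p < e powr p"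
      using assms by (auto simp: supp_def intro!: powr_less_mono2)
    then show "mu x * \<bar>d x\<bar> powr p < mu x * e powr p" by simp
  qed (use supp_nonempty in auto)
  also have "\<dots> = e powr p" using sum_supp by (simp add: sum_distrib_right[symmetric])
  finally have "(\<Sum>x\<in>supp. mu x * \<bar>d x\<bar> powr p) powr (1/p) < (e powr p) powr (1/p)"
    using assms(1) by (intro powr_less_mono2) (auto intro!: sum_nonneg simp: mu_nonneg)
  also have "\<dots> = e" using assms by (simp add: powr_powr)
  finally show ?thesis by (simp add: Lp_norm_eq_sum)
qed

lemma abs_le_Lp_norm:
  assumes "0 < p" and "x \<in> supp"
  shows "\<bar>d x\<bar> \<le> Lp_norm mu p d / mu x powr (1/p)"
proof -
  define s where "s = (\<Sum>x\<in>supp. mu x * \<bar>d x\<bar> powr p)"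
  have mu_x: "0 < mu x" using assms(2) by (simp add: supp_def)
  have "mu x * \<bar>d x\<bar> powr p \<le> s"
    unfolding s_def by (rule member_le_sum) (use assms(2) in \<open>auto simp: mu_nonneg\<close>)
  then have "\<bar>d x\<bar> powr p \<le> s / mu x" using mu_x by (simp add: field_simps)
  then have "(\<bar>d x\<bar> powr p) powr (1/p) \<le> (s / mu x) powr (1/p)"
    using assms(1) by (intro powr_mono2) auto
  then show ?thesis
    using assms(1) mu_x by (simp add: powr_powr powr_divide s_def Lp_norm_eq_sum mu_nonneg sum_nonneg)
qed

lemma Lp_tendsto_iff_pointwise:
  assumes "0 < p"
  shows "Lp_tendsto mu p s h \<longleftrightarrow> (\<forall>x\<in>supp. (\<lambda>n. s n x) \<longlonglongrightarrow> h x)"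
proof
  assume lim: "Lp_tendsto mu p s h"
  show "\<forall>x\<in>supp. (\<lambda>n. s n x) \<longlonglongrightarrow> h x"
  proof
    fix x assume x: "x \<in> supp"
    have "norm (s n x - h x) \<le> Lp_norm mu p (\<lambda>x. s n x - h x) / mu x powr (1/p)" for n
      using abs_le_Lp_norm[OF assms x, of "\<lambda>x. s n x - h x"] by simp
    moreover have "(\<lambda>n. Lp_norm mu p (\<lambda>x. s n x - h x) / mu x powr (1/p)) \<longlonglongrightarrow> 0"
      using tendsto_divide_zero[OF lim[unfolded Lp_tendsto_def]] by simp
    ultimately have "(\<lambda>n. s n x - h x) \<longlonglongrightarrow> 0"
      by (rule Lim_null_comparison[OF always_eventually[OF allI]])
    then show "(\<lambda>n. s n x) \<longlonglongrightarrow> h x" by (simp add: LIM_zero_cancel)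
  qed
next
  assume lim: "\<forall>x\<in>supp. (\<lambda>n. s n x) \<longlonglongrightarrow> h x"
  show "Lp_tendsto mu p s h"
    unfolding Lp_tendsto_def
  proof (rule tendstoI)
    fix e :: real assume "0 < e"
    have "\<forall>x\<in>supp. eventually (\<lambda>n. \<bar>s n x - h x\<bar> < e) sequentially"
    proof
      fix x assume "x \<in> supp"
      from tendstoD[OF lim[rule_format, OF this] \<open>0 < e\<close>]
      show "eventually (\<lambda>n. \<bar>s n x - h x\<bar> < e) sequentially" by (simp add: dist_real_def)
    qed
    then have "eventually (\<lambda>n. \<forall>x\<in>supp. \<bar>s n x - h x\<bar> < e) sequentially"
      by (simp add: eventually_ball_finite_distrib)
    then show "eventually (\<lambda>n. dist (Lp_norm mu p (\<lambda>x. s n x - h x)) 0 < e) sequentially"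
      by eventually_elim
        (use Lp_norm_less[OF assms \<open>0 < e\<close>] in \<open>auto simp: Lp_norm_def\<close>)
  qed
qed

lemma Lp_bounded_imp_convergent_subseq:
  fixes s :: "nat \<Rightarrow> 'x \<Rightarrow> real"
  assumes "0 < p" and B: "\<And>n. \<bar>Lp_norm mu p (s n)\<bar> \<le> B"
  shows "\<exists>r l. strict_mono r \<and> (\<forall>x\<in>supp. (\<lambda>n. s (r n) x) \<longlonglongrightarrow> l x)"
proof -
  have B_nonneg: "0 \<le> B" using B[of 0] by linarith
  define C where "C = (\<Sum>y\<in>supp. B / mu y powr (1/p))"
  have C_nonneg: "0 \<le> C" unfolding C_def by (intro sum_nonneg divide_nonneg_nonneg B_nonneg) simp
  have bound: "\<bar>if x \<in> supp then s n x else 0\<bar> \<le> C" for n x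
  proof (cases "x \<in> supp")
    case True
    have "\<bar>s n x\<bar> \<le> Lp_norm mu p (s n) / mu x powr (1/p)" by (rule abs_le_Lp_norm[OF assms(1) True])
    also have "\<dots> \<le> B / mu x powr (1/p)" using B[of n] True by (intro divide_right_mono) auto
    also have "\<dots> \<le> C" unfolding C_def by (rule member_le_sum) (use True B_nonneg in auto)
    finally show ?thesis using True by simp
  qed (simp add: C_nonneg)
  obtain r l where "strict_mono r"
    and l: "\<forall>x. (\<lambda>n. if x \<in> supp then s (r n) x else 0) \<longlonglongrightarrow> l x"
    using pointwise_convergent_subseq[of "\<lambda>n x. if x \<in> supp then s n x else 0", OF bound] by blast
  moreover have "\<forall>x\<in>supp. (\<lambda>n. s (r n) x) \<longlonglongrightarrow> l x"
  proof
    fix x assume "x \<in> supp"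
    then show "(\<lambda>n. s (r n) x) \<longlonglongrightarrow> l x" using l[rule_format, of x] by simp
  qed
  ultimately show ?thesis by blast
qed

lemma pointwise_convergent_imp_Lp_Cauchy:
  fixes f :: "nat \<Rightarrow> 'x \<Rightarrow> real"
  assumes "0 < p" and lim: "\<forall>x\<in>supp. (\<lambda>n. f n x) \<longlonglongrightarrow> g x" and e: "0 < e"
  shows "\<exists>N. \<forall>m\<ge>N. \<forall>n\<ge>N. Lp_norm mu p (\<lambda>x. f m x - f n x) < e"
proof -
  have "\<forall>x\<in>supp. eventually (\<lambda>n. \<bar>f n x - g x\<bar> < e / 2) sequentially"
  proof
    fix x assume "x \<in> supp"
    from tendstoD[OF lim[rule_format, OF this] half_gt_zero[OF e]]
    show "eventually (\<lambda>n. \<bar>f n x - g x\<bar> < e / 2) sequentially" by (simp add: dist_real_def)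
  qed
  then have "eventually (\<lambda>n. \<forall>x\<in>supp. \<bar>f n x - g x\<bar> < e / 2) sequentially"
    by (simp add: eventually_ball_finite_distrib)
  then obtain N where N: "\<And>n. N \<le> n \<Longrightarrow> \<forall>x\<in>supp. \<bar>f n x - g x\<bar> < e / 2"
    by (auto simp: eventually_sequentially)
  have "Lp_norm mu p (\<lambda>x. f m x - f n x) < e" if "N \<le> m" "N \<le> n" for m n
  proof (intro Lp_norm_less[OF assms(1) e] ballI)
    fix x assume "x \<in> supp"
    then have "\<bar>f m x - g x\<bar> < e / 2" "\<bar>f n x - g x\<bar> < e / 2"
      using N[OF that(1)] N[OF that(2)] by blast+
    then show "\<bar>f m x - f n x\<bar> < e" by linarith
  qed
  then show ?thesis by blast
qed

lemma compact_op_if_continuous: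
  fixes A :: "('x \<Rightarrow> real) \<Rightarrow> 'x \<Rightarrow> real"
  assumes "0 < p"
    and continuous: "\<And>f g. \<forall>x\<in>supp. (\<lambda>n. f n x) \<longlonglongrightarrow> g x \<Longrightarrow>
      \<forall>x\<in>supp. (\<lambda>n. A (f n) x) \<longlonglongrightarrow> A g x"
  shows "compact_op mu p A"
  unfolding compact_op_def
proof (intro allI impI)
  fix s :: "nat \<Rightarrow> 'x \<Rightarrow> real"
  assume "(\<forall>n. Lp_mem mu p (s n)) \<and> bounded (range (\<lambda>n. Lp_norm mu p (s n)))"
  then obtain B where "\<And>n. \<bar>Lp_norm mu p (s n)\<bar> \<le> B" by (auto simp: bounded_iff)
  then obtain r l where r: "strict_mono r" and "\<forall>x\<in>supp. (\<lambda>n. s (r n) x) \<longlonglongrightarrow> l x"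
    using Lp_bounded_imp_convergent_subseq[OF assms(1)] by blast
  then have lim: "\<forall>x\<in>supp. (\<lambda>n. A (s (r n)) x) \<longlonglongrightarrow> A l x" by (intro continuous)
  have "\<exists>N. \<forall>m\<ge>N. \<forall>n\<ge>N. Lp_norm mu p (\<lambda>x. A (s (r m)) x - A (s (r n)) x) < e"
    if "0 < e" for e
    by (rule pointwise_convergent_imp_Lp_Cauchy[OF assms(1) lim that])
  then show "\<exists>r::nat \<Rightarrow> nat. strict_mono r \<and>
      (\<forall>e>0. \<exists>N::nat. \<forall>m\<ge>N. \<forall>n\<ge>N. Lp_norm mu p (\<lambda>x. A (s (r m)) x - A (s (r n)) x) < e)"
    using r by blast
qed

end

section \<open>Path sums and the mean kernel\<close>

definition kernel_op :: "('x::finite \<Rightarrow> 'x \<Rightarrow> real) \<Rightarrow> ('x \<Rightarrow> real) \<Rightarrow> 'x \<Rightarrow> real" where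
  "kernel_op W h x = (\<Sum>y\<in>UNIV. W x y * h y)"

lemma kernel_op_diff: "kernel_op W (\<lambda>y. f y - g y) x = kernel_op W f x - kernel_op W g x"
  by (simp add: kernel_op_def algebra_simps sum_subtractf)

lemma kernel_op_scale: "kernel_op W (\<lambda>y. c * f y) x = c * kernel_op W f x"
  by (simp add: kernel_op_def sum_distrib_left algebra_simps)

lemma kernel_op_mono:
  "(\<And>x y. 0 \<le> W x y) \<Longrightarrow> (\<And>y. f y \<le> g y) \<Longrightarrow> kernel_op W f x \<le> kernel_op W g x"
  unfolding kernel_op_def by (intro sum_mono mult_left_mono) auto

lemma funpow_kernel_op_nonneg:
  "(\<And>x y. 0 \<le> W x y) \<Longrightarrow> (\<And>y. 0 \<le> f y) \<Longrightarrow> 0 \<le> (kernel_op W ^^ n) f x"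
  by (induction n arbitrary: x) (auto simp: kernel_op_def intro!: sum_nonneg)

lemma sum_paths_eq_funpow:
  fixes W :: "'x::finite \<Rightarrow> 'x \<Rightarrow> real"
  shows "(\<Sum>xs\<in>PiE {1..n} (\<lambda>_. UNIV).
      (\<Prod>t\<in>{1..n}. W ((xs(0:=x)) (t-1)) ((xs(0:=x)) t)) * f ((xs(0:=x)) n))
    = (kernel_op W ^^ n) f x"
proof (induction n arbitrary: f)
  case 0
  then show ?case by simp
next
  case (Suc n)
  define G where "G g = (\<Prod>t\<in>{1..n}. W ((g(0:=x)) (t-1)) ((g(0:=x)) t))" for g :: "nat \<Rightarrow> 'x"
  have paths: "PiE {1..Suc n} (\<lambda>_. UNIV::'x set)
      = (\<lambda>(y, g). g(Suc n := y)) ` (UNIV \<times> PiE {1..n} (\<lambda>_. UNIV))"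
    using PiE_insert_eq[of "Suc n" "{1..n}" "\<lambda>_. UNIV::'x set"] by (simp add: atLeastAtMostSuc_conv)
  have inj: "inj_on (\<lambda>(y, g). g(Suc n := y)) (UNIV \<times> PiE {1..n} (\<lambda>_. UNIV::'x set))"
    using inj_combinator[of "Suc n" "{1..n}" "\<lambda>_. UNIV::'x set"] by simp
  have extend: "(\<Prod>t\<in>{1..Suc n}. W (((g(Suc n := y))(0:=x)) (t-1)) (((g(Suc n := y))(0:=x)) t))
        * f (((g(Suc n := y))(0:=x)) (Suc n))
      = G g * (W ((g(0:=x)) n) y * f y)" for g y
  proof -
    have "(\<Prod>t\<in>{1..n}. W (((g(Suc n := y))(0:=x)) (t-1)) (((g(Suc n := y))(0:=x)) t)) = G g"
      unfolding G_def by (intro prod.cong) auto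
    then show ?thesis by (simp add: atLeastAtMostSuc_conv mult_ac)
  qed
  have "(\<Sum>xs\<in>PiE {1..Suc n} (\<lambda>_. UNIV).
        (\<Prod>t\<in>{1..Suc n}. W ((xs(0:=x)) (t-1)) ((xs(0:=x)) t)) * f ((xs(0:=x)) (Suc n)))
      = (\<Sum>(y,g)\<in>UNIV \<times> PiE {1..n} (\<lambda>_. UNIV). G g * (W ((g(0:=x)) n) y * f y))"
    unfolding paths sum.reindex[OF inj] by (rule sum.cong) (auto simp only: comp_def extend)
  also have "\<dots> = (\<Sum>g\<in>PiE {1..n} (\<lambda>_. UNIV). G g * kernel_op W f ((g(0:=x)) n))"
    by (subst sum.cartesian_product[symmetric], subst sum.swap)
      (simp add: kernel_op_def sum_distrib_left)
  also have "\<dots> = (kernel_op W ^^ Suc n) f x"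
    unfolding G_def Suc.IH by (simp add: funpow_Suc_right del: funpow.simps)
  finally show ?case .
qed

lemma Ex_prod_eq_funpow:
  fixes P :: "'x::finite \<Rightarrow> 'x \<Rightarrow> real"
  assumes "prob_space nu" and "\<forall>x y. integrable nu (phi x y)"
  shows "Ex_prod P phi nu x n = (kernel_op (\<lambda>x y. P x y * phibar phi nu x y) ^^ n) (\<lambda>_. 1) x"
proof -
  interpret product_sigma_finite "\<lambda>_::nat. nu"
    unfolding product_sigma_finite_def using assms(1) by (simp add: prob_space_imp_sigma_finite)
  have integral_path: "(\<integral>\<eta>s. (\<Prod>t\<in>{1..n}. phi (xs (t - 1)) (xs t) (\<eta>s t)) \<partial>PiM {1..n} (\<lambda>_. nu))
      = (\<Prod>t\<in>{1..n}. phibar phi nu (xs (t - 1)) (xs t))" for xs :: "nat \<Rightarrow> 'x"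
    unfolding phibar_def by (rule product_integral_prod) (auto simp: assms(2))
  have "Ex_prod P phi nu x n = (\<Sum>xs\<in>PiE {1..n} (\<lambda>_. UNIV).
      (\<Prod>t\<in>{1..n}. P ((xs(0:=x)) (t-1)) ((xs(0:=x)) t) * phibar phi nu ((xs(0:=x)) (t-1)) ((xs(0:=x)) t))
        * (\<lambda>_. 1) ((xs(0:=x)) n))"
    unfolding Ex_prod_def Let_def prod.distrib mult_1_right
    by (rule sum.cong[OF refl]) (simp only: integral_path)
  also have "\<dots> = (kernel_op (\<lambda>x y. P x y * phibar phi nu x y) ^^ n) (\<lambda>_. 1) x"
    by (rule sum_paths_eq_funpow)
  finally show ?thesis .
qed

lemma Vop_eq_kernel_op: "Vop P phi nu = kernel_op (\<lambda>x y. P x y * phibar phi nu x y)"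
  by (auto simp: fun_eq_iff Vop_def kernel_op_def mult_ac)

section \<open>Perron vectors of nonnegative matrices\<close>

definition simplex_on :: "'x::finite set \<Rightarrow> (real ^ 'x) set" where
  "simplex_on S = {u. (\<forall>i. 0 \<le> u$i) \<and> (\<forall>i. i \<notin> S \<longrightarrow> u$i = 0) \<and> (\<Sum>i\<in>UNIV. u$i) = 1}"

lemma convex_simplex_on: "convex (simplex_on S)"
  unfolding simplex_on_def convex_def
  by (auto simp: sum.distrib sum_distrib_left[symmetric] add_nonneg_nonneg)

lemma compact_simplex_on: "compact (simplex_on S)"
proof -
  have "simplex_on S = (\<Inter>i. {u. 0 \<le> u$i}) \<inter> (\<Inter>i\<in>-S. {u. u$i = 0}) \<inter> {u. (\<Sum>i\<in>UNIV. u$i) = 1}"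
    by (auto simp: simplex_on_def)
  then have "closed (simplex_on S)"
    by (auto intro!: closed_Int closed_INT closed_Collect_le closed_Collect_eq continuous_intros)
  moreover have "simplex_on S \<subseteq> cball 0 1"
  proof
    fix u assume "u \<in> simplex_on S"
    then show "u \<in> cball 0 1" using norm_le_l1_cart[of u] by (simp add: simplex_on_def)
  qed
  ultimately show ?thesis
    by (meson bounded_cball bounded_subset compact_eq_bounded_closed)
qed

lemma simplex_on_nonempty: "S \<noteq> {} \<Longrightarrow> simplex_on S \<noteq> {}"
proof -
  assume "S \<noteq> {}"
  then obtain s where "s \<in> S" by blast
  then have "(\<chi> i. if i = s then 1 else 0) \<in> simplex_on S" by (simp add: simplex_on_def)
  then show ?thesis by blast
qed

lemma simplex_on_ex_pos:
  assumes "u \<in> simplex_on S"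
  shows "\<exists>i\<in>S. 0 < u$i"
proof (rule ccontr)
  assume "\<not> (\<exists>i\<in>S. 0 < u$i)"
  then have "u$i = 0" for i
  proof (cases "i \<in> S")
    case True
    then have "\<not> 0 < u$i" using \<open>\<not> (\<exists>i\<in>S. 0 < u$i)\<close> by blast
    moreover have "0 \<le> u$i" using assms by (simp add: simplex_on_def)
    ultimately show ?thesis by simp
  qed (use assms in \<open>simp add: simplex_on_def\<close>)
  then show False using assms by (simp add: simplex_on_def)
qed

lemma simplex_on_sum_kernel_pos:
  fixes A :: "'x::finite \<Rightarrow> 'x \<Rightarrow> real"
  assumes A_nonneg: "\<And>x y. 0 \<le> A x y" and column_pos: "\<And>y. y \<in> S \<Longrightarrow> \<exists>x\<in>S. 0 < A x y"
    and u: "u \<in> simplex_on S"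
  shows "0 < (\<Sum>x\<in>S. \<Sum>y\<in>S. A x y * u$y)"
proof -
  obtain y where y: "y \<in> S" "0 < u$y" using simplex_on_ex_pos[OF u] by blast
  then obtain x where x: "x \<in> S" "0 < A x y" using column_pos by blast
  have u_nonneg: "0 \<le> u$i" for i using u by (simp add: simplex_on_def)
  have "0 < A x y * u$y" using x y by simp
  also have "\<dots> \<le> (\<Sum>y\<in>S. A x y * u$y)"
    by (rule member_le_sum) (use y u_nonneg A_nonneg in auto)
  also have "\<dots> \<le> (\<Sum>x\<in>S. \<Sum>y\<in>S. A x y * u$y)"
    by (rule member_le_sum[where f="\<lambda>x. \<Sum>y\<in>S. A x y * u$y"])
      (use x u_nonneg A_nonneg in \<open>auto intro!: sum_nonneg\<close>)
  finally show ?thesis .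
qed

text \<open>The Perron vector is a fixed point of the normalised map u \<mapsto> Au / (sum of Au)
  on the simplex over S, which Brouwer's theorem provides.\<close>

lemma exists_nonneg_eigenvector:
  fixes A :: "'x::finite \<Rightarrow> 'x \<Rightarrow> real"
  assumes A_nonneg: "\<And>x y. 0 \<le> A x y" and "S \<noteq> {}"
    and column_pos: "\<And>y. y \<in> S \<Longrightarrow> \<exists>x\<in>S. 0 < A x y"
  shows "\<exists>r v. 0 < r \<and> (\<forall>x. 0 \<le> v x) \<and> (\<exists>x\<in>S. 0 < v x) \<and>
    (\<forall>x\<in>S. (\<Sum>y\<in>S. A x y * v y) = r * v x)"
proof -
  define D where "D u = (\<Sum>x\<in>S. \<Sum>y\<in>S. A x y * u$y)" for u :: "real^'x"
  define F where "F u = (\<chi> x. if x \<in> S then (\<Sum>y\<in>S. A x y * u$y) / D u else 0)" for u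
  have D_pos: "0 < D u" if "u \<in> simplex_on S" for u
    unfolding D_def by (rule simplex_on_sum_kernel_pos[OF A_nonneg column_pos that])
  have "continuous_on (simplex_on S) F"
    unfolding F_def
  proof (intro continuous_on_vec_lambda)
    fix x
    show "continuous_on (simplex_on S) (\<lambda>u. if x \<in> S then (\<Sum>y\<in>S. A x y * u$y) / D u else 0)"
    proof (cases "x \<in> S")
      case True
      then show ?thesis
        unfolding D_def by (simp, intro continuous_intros) (use D_pos in \<open>fastforce simp: D_def\<close>)
    qed simp
  qed
  moreover have "F \<in> simplex_on S \<rightarrow> simplex_on S"
  proof
    fix u assume u: "u \<in> simplex_on S"
    have "(\<Sum>i\<in>UNIV. F u $ i) = (\<Sum>x\<in>S. (\<Sum>y\<in>S. A x y * u$y) / D u)"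
      unfolding F_def by (simp add: sum.If_cases)
    also have "\<dots> = 1" using D_pos[OF u] by (simp add: sum_divide_distrib[symmetric] D_def)
    finally show "F u \<in> simplex_on S" using D_pos[OF u] u A_nonneg
      by (auto simp: simplex_on_def F_def intro!: divide_nonneg_pos sum_nonneg)
  qed
  ultimately obtain u where u: "u \<in> simplex_on S" "F u = u"
    using brouwer[OF compact_simplex_on convex_simplex_on simplex_on_nonempty[OF \<open>S \<noteq> {}\<close>]]
    by blast
  have "(\<Sum>y\<in>S. A x y * u$y) = D u * u$x" if "x \<in> S" for x
    using D_pos[OF u(1)] arg_cong[OF u(2), of "\<lambda>u. u$x"] that by (simp add: F_def field_simps)
  then show ?thesis
    using D_pos[OF u(1)] simplex_on_ex_pos[OF u(1)] u(1)
    by (intro exI[of _ "D u"] exI[of _ "\<lambda>x. u$x"]) (auto simp: simplex_on_def)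
qed

lemma eigenvector_pos_if_irreducible:
  fixes A :: "'x \<Rightarrow> 'x \<Rightarrow> real"
  assumes A_nonneg: "\<And>x y. 0 \<le> A x y" and v_nonneg: "\<And>x. 0 \<le> v x" and "\<exists>z\<in>S. 0 < v z"
    and eigen: "\<And>x. x \<in> S \<Longrightarrow> (\<Sum>y\<in>S. A x y * v y) = r * v x"
    and irreducible: "\<And>x y. x \<in> S \<Longrightarrow> y \<in> S \<Longrightarrow> (x, y) \<in> {(x, y). x \<in> S \<and> y \<in> S \<and> 0 < A x y}\<^sup>*"
    and "x \<in> S" and "finite S"
  shows "0 < v x"
proof -
  obtain z where z: "z \<in> S" "0 < v z" using assms(3) by blast
  from irreducible[OF \<open>x \<in> S\<close> z(1)] show ?thesis
  proof (induction rule: converse_rtrancl_induct)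
    case base
    then show ?case using z by simp
  next
    case (step y y')
    then have y: "y \<in> S" "y' \<in> S" "0 < A y y'" by auto
    have "0 < A y y' * v y'" using y step by simp
    also have "\<dots> \<le> (\<Sum>u\<in>S. A y u * v u)"
      by (rule member_le_sum) (use y A_nonneg v_nonneg \<open>finite S\<close> in auto)
    also have "\<dots> = r * v y" using eigen y by blast
    finally show ?case using v_nonneg[of y] by (metis mult_zero_right order.order_iff_strict)
  qed
qed

section \<open>The affine recursion h \<mapsto> M h + b on the support\<close>

locale affine_kernel = prob_vector mu for mu :: "'x::finite \<Rightarrow> real" +
  fixes M :: "'x \<Rightarrow> 'x \<Rightarrow> real" and b :: "'x \<Rightarrow> real"
  assumes M_nonneg: "\<And>x y. 0 \<le> M x y"
    and b_nonneg: "\<And>x. 0 \<le> b x"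
    and positive_closed: "\<And>x y. 0 < mu x \<Longrightarrow> 0 < M x y \<Longrightarrow> 0 < mu y"
    and positive_pred: "\<And>y. 0 < mu y \<Longrightarrow> \<exists>x. 0 < mu x \<and> 0 < M x y"
    and positive_succ: "\<And>x. 0 < mu x \<Longrightarrow> \<exists>y. 0 < mu y \<and> 0 < M x y"
    and positive_irreducible: "\<And>x y. 0 < mu x \<Longrightarrow> 0 < mu y \<Longrightarrow>
      (x, y) \<in> {(x, y). 0 < mu x \<and> 0 < mu y \<and> 0 < M x y}\<^sup>*"
    and positive_forcing: "\<exists>x. 0 < mu x \<and> 0 < b x"
begin

lemma supp_closed: "x \<in> supp \<Longrightarrow> 0 < M x y \<Longrightarrow> y \<in> supp"
  using positive_closed by (simp add: supp_def)

lemma supp_pred: "y \<in> supp \<Longrightarrow> \<exists>x\<in>supp. 0 < M x y"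
  using positive_pred by (simp add: supp_def)

lemma supp_succ: "x \<in> supp \<Longrightarrow> \<exists>y\<in>supp. 0 < M x y"
  using positive_succ by (simp add: supp_def)

lemma irreducible:
  "x \<in> supp \<Longrightarrow> y \<in> supp \<Longrightarrow> (x, y) \<in> {(x, y). x \<in> supp \<and> y \<in> supp \<and> 0 < M x y}\<^sup>*"
  using positive_irreducible by (simp add: supp_def)

lemma b_pos: "\<exists>x\<in>supp. 0 < b x"
  using positive_forcing by (simp add: supp_def)

definition T :: "('x \<Rightarrow> real) \<Rightarrow> 'x \<Rightarrow> real" where
  "T h x = kernel_op M h x + b x"

text \<open>Only used for r < 1: otherwise the orbit of 0 may diverge and lim returns
  an unspecified value.\<close>

definition fixpoint :: "'x \<Rightarrow> real" where
  "fixpoint x = lim (\<lambda>n. (T ^^ n) (\<lambda>_. 0) x)"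

lemma kernel_op_eq_sum_supp:
  assumes "x \<in> supp"
  shows "kernel_op M f x = (\<Sum>y\<in>supp. M x y * f y)"
proof -
  have "M x y = 0" if "y \<notin> supp" for y
    using supp_closed[OF assms, of y] M_nonneg[of x y] that by (auto simp: order_less_le)
  then show ?thesis unfolding kernel_op_def by (intro sum.mono_neutral_right) auto
qed

lemma kernel_op_mono_supp:
  "x \<in> supp \<Longrightarrow> \<forall>y\<in>supp. f y \<le> g y \<Longrightarrow> kernel_op M f x \<le> kernel_op M g x"
  by (simp add: kernel_op_eq_sum_supp sum_mono mult_left_mono M_nonneg)

lemma funpow_kernel_op_mono_supp:
  "x \<in> supp \<Longrightarrow> \<forall>y\<in>supp. f y \<le> g y \<Longrightarrow> (kernel_op M ^^ n) f x \<le> (kernel_op M ^^ n) g x"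
  by (induction n arbitrary: x) (simp_all add: kernel_op_mono_supp)

lemma T_iter_diff: "(T ^^ n) f x - (T ^^ n) g x = (kernel_op M ^^ n) (\<lambda>y. f y - g y) x"
  by (induction n arbitrary: x) (simp_all add: T_def kernel_op_diff[symmetric])

lemma T_mono: "(\<And>y. f y \<le> g y) \<Longrightarrow> T f x \<le> T g x"
  unfolding T_def by (simp add: kernel_op_mono M_nonneg)

lemma T_iter_fixed:
  assumes "\<forall>y\<in>supp. T h y = h y" and "x \<in> supp"
  shows "(T ^^ n) h x = h x"
  using assms(2)
proof (induction n arbitrary: x)
  case (Suc n)
  have "(T ^^ Suc n) h x = kernel_op M ((T ^^ n) h) x + b x"
    by (simp only: funpow.simps o_apply T_def[of "(T ^^ n) h" x])
  also have "kernel_op M ((T ^^ n) h) x = kernel_op M h x"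
    using Suc by (simp add: kernel_op_eq_sum_supp)
  finally show ?case using assms(1) Suc.prems by (simp add: T_def)
qed simp

lemma incseq_T_iter_zero: "incseq (\<lambda>n. (T ^^ n) (\<lambda>_. 0) x)"
proof (rule incseq_SucI)
  show "(T ^^ n) (\<lambda>_. 0) x \<le> (T ^^ Suc n) (\<lambda>_. 0) x" for n
  proof (induction n arbitrary: x)
    case 0
    then show ?case by (simp add: T_def kernel_op_def b_nonneg)
  next
    case (Suc n)
    have "T ((T ^^ n) (\<lambda>_. 0)) x \<le> T ((T ^^ Suc n) (\<lambda>_. 0)) x" by (rule T_mono) (rule Suc.IH)
    then show ?case by (simp only: funpow.simps o_apply)
  qed
qed

lemma T_iter_zero_nonneg: "0 \<le> (T ^^ n) (\<lambda>_. 0) x"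
  using incseqD[OF incseq_T_iter_zero, of 0 n] by simp

lemma A3_kernel_op:
  assumes "1 \<le> p"
  shows "A3 mu p (kernel_op M) b"
proof -
  have "compact_op mu p (kernel_op M)"
  proof (rule compact_op_if_continuous)
    show "0 < p" using assms by simp
    fix f :: "nat \<Rightarrow> 'x \<Rightarrow> real" and g :: "'x \<Rightarrow> real"
    assume "\<forall>x\<in>supp. (\<lambda>n. f n x) \<longlonglongrightarrow> g x"
    then show "\<forall>x\<in>supp. (\<lambda>n. kernel_op M (f n) x) \<longlonglongrightarrow> kernel_op M g x"
      by (simp add: kernel_op_eq_sum_supp tendsto_sum tendsto_mult_left)
  qed
  then show ?thesis
    unfolding A3_def by (auto simp: Hp_mem_iff b_nonneg Lp_mem_finite intro!: exI[of _ 1])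
qed

lemma Markov_sol_iff: "Markov_sol mu p T h \<longleftrightarrow> (\<forall>x\<in>supp. 0 \<le> h x \<and> T h x = h x)"
  unfolding Markov_sol_def Hp_mem_iff ae_eq_iff by auto

lemma Markov_sol_Lp_tendsto_self:
  assumes "0 < p" and "Markov_sol mu p T h"
  shows "Lp_tendsto mu p (\<lambda>n. (T ^^ n) h) h"
  using assms T_iter_fixed by (auto simp: Lp_tendsto_iff_pointwise Markov_sol_iff)

end

section \<open>Growth rate and the dichotomy at the Perron root\<close>

lemma tendsto_ln_rate_of_geometric_bounds:
  fixes a :: "nat \<Rightarrow> real"
  assumes "0 < A" and "0 < B" and "0 < c"
    and bounds: "\<And>n. A * c^n \<le> a n \<and> a n \<le> B * c^n"
  shows "(\<lambda>n. 1 / real n * ln (a n)) \<longlonglongrightarrow> ln c"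
proof (rule tendsto_sandwich[where f="\<lambda>n. ln c + ln A / real n" and h="\<lambda>n. ln c + ln B / real n"])
  show "(\<lambda>n. ln c + ln A / real n) \<longlonglongrightarrow> ln c" "(\<lambda>n. ln c + ln B / real n) \<longlonglongrightarrow> ln c"
    using tendsto_add[OF tendsto_const lim_const_over_n[of "ln A"], of "ln c"]
      tendsto_add[OF tendsto_const lim_const_over_n[of "ln B"], of "ln c"] by simp_all
  have "ln c + ln A / real n \<le> 1 / real n * ln (a n) \<and> 1 / real n * ln (a n) \<le> ln c + ln B / real n"
    if "0 < n" for n
  proof -
    have "0 < A * c^n" using assms by simp
    then have "ln (A * c^n) \<le> ln (a n) \<and> ln (a n) \<le> ln (B * c^n)"
      using bounds[of n] by (auto simp del: ln_mult)
    then have "ln A + real n * ln c \<le> ln (a n) \<and> ln (a n) \<le> ln B + real n * ln c"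
      using assms by (simp add: ln_mult ln_realpow)
    then have "(ln A + real n * ln c) / real n \<le> ln (a n) / real n \<and>
        ln (a n) / real n \<le> (ln B + real n * ln c) / real n"
      by (auto intro: divide_right_mono)
    moreover have "(ln A + real n * ln c) / real n = ln c + ln A / real n"
      "(ln B + real n * ln c) / real n = ln c + ln B / real n"
      using that by (simp_all add: field_simps)
    ultimately show ?thesis by simp
  qed
  then show "eventually (\<lambda>n. ln c + ln A / real n \<le> 1 / real n * ln (a n)) sequentially"
    "eventually (\<lambda>n. 1 / real n * ln (a n) \<le> ln c + ln B / real n) sequentially"
    by (auto intro!: eventually_sequentiallyI[of 1])
qed

lemma power_powr_swap: "0 < c \<Longrightarrow> (c ^ n) powr p = (c powr p) ^ n"
  for c :: real
  by (simp add: powr_realpow[symmetric] powr_powr mult.commute)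

locale perron_affine_kernel = affine_kernel mu M b
  for mu :: "'x::finite \<Rightarrow> real" and M b +
  fixes r :: real and v w :: "'x \<Rightarrow> real"
  assumes r_pos: "0 < r"
    and v_pos: "\<And>x. x \<in> supp \<Longrightarrow> 0 < v x"
    and v_eigen: "\<And>x. x \<in> supp \<Longrightarrow> kernel_op M v x = r * v x"
    and w_pos: "\<And>x. x \<in> supp \<Longrightarrow> 0 < w x"
    and w_eigen: "\<And>y. y \<in> supp \<Longrightarrow> (\<Sum>x\<in>supp. w x * M x y) = r * w y"

context affine_kernel
begin

text \<open>Pairing the right and left eigen-equations with the left and right eigenvectors
  shows that their eigenvalues agree.\<close>

lemma perron_affine_kernel_exists: "\<exists>r v w. perron_affine_kernel mu M b r v w"
proof -
  obtain r v where r: "0 < r" and v_nonneg: "\<forall>x. 0 \<le> v x" and "\<exists>x\<in>supp. 0 < v x"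
    and v_eigen: "\<forall>x\<in>supp. (\<Sum>y\<in>supp. M x y * v y) = r * v x"
    using exists_nonneg_eigenvector[of M supp, OF M_nonneg supp_nonempty supp_pred] by blast
  obtain r' w where w_nonneg: "\<forall>x. 0 \<le> w x" and "\<exists>x\<in>supp. 0 < w x"
    and w_eigen: "\<forall>y\<in>supp. (\<Sum>x\<in>supp. M x y * w x) = r' * w y"
    using exists_nonneg_eigenvector[of "\<lambda>x y. M y x" supp, OF M_nonneg supp_nonempty supp_succ] by blast
  have v_pos: "0 < v x" if "x \<in> supp" for x
    by (rule eigenvector_pos_if_irreducible[of M v supp r, OF M_nonneg v_nonneg[rule_format]
      \<open>\<exists>x\<in>supp. 0 < v x\<close> v_eigen[rule_format] irreducible that finite])
  have "{(x, y). x \<in> supp \<and> y \<in> supp \<and> 0 < M x y}\<inverse> = {(x, y). x \<in> supp \<and> y \<in> supp \<and> 0 < M y x}"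
    by auto
  then have irreducible_transpose: "(x, y) \<in> {(x, y). x \<in> supp \<and> y \<in> supp \<and> 0 < M y x}\<^sup>*"
    if "x \<in> supp" "y \<in> supp" for x y
    using rtrancl_converseI[OF irreducible[OF that(2,1)]] by simp
  have w_pos: "0 < w x" if "x \<in> supp" for x
    by (rule eigenvector_pos_if_irreducible[of "\<lambda>x y. M y x" w supp r', OF M_nonneg
      w_nonneg[rule_format] \<open>\<exists>x\<in>supp. 0 < w x\<close> w_eigen[rule_format] irreducible_transpose that finite])
  have "r' * (\<Sum>y\<in>supp. w y * v y) = (\<Sum>y\<in>supp. (\<Sum>x\<in>supp. M x y * w x) * v y)"
    using w_eigen by (simp add: sum_distrib_left mult_ac)
  also have "\<dots> = (\<Sum>y\<in>supp. \<Sum>x\<in>supp. w x * M x y * v y)"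
    by (simp add: sum_distrib_left sum_distrib_right mult_ac)
  also have "\<dots> = (\<Sum>x\<in>supp. w x * (\<Sum>y\<in>supp. M x y * v y))"
    by (subst sum.swap) (simp add: sum_distrib_left mult.assoc)
  also have "\<dots> = r * (\<Sum>y\<in>supp. w y * v y)"
    using v_eigen by (simp add: sum_distrib_left algebra_simps)
  finally have "r' * (\<Sum>y\<in>supp. w y * v y) = r * (\<Sum>y\<in>supp. w y * v y)" .
  moreover have "0 < (\<Sum>y\<in>supp. w y * v y)"
    using supp_nonempty v_pos w_pos by (intro sum_pos) auto
  ultimately have "r' = r" by simp
  then have "perron_affine_kernel mu M b r v w"
    using r v_pos w_pos v_eigen w_eigen
    by unfold_locales (auto simp: kernel_op_eq_sum_supp mult.commute)
  then show ?thesis by blast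
qed

end

context perron_affine_kernel
begin

lemma funpow_kernel_op_v:
  "x \<in> supp \<Longrightarrow> (kernel_op M ^^ n) (\<lambda>y. c * v y) x = c * r ^ n * v x"
proof (induction n arbitrary: x)
  case (Suc n)
  then have "kernel_op M ((kernel_op M ^^ n) (\<lambda>y. c * v y)) x = kernel_op M (\<lambda>y. (c * r ^ n) * v y) x"
    by (simp add: kernel_op_eq_sum_supp)
  then show ?case using v_eigen[OF Suc.prems] by (simp add: kernel_op_scale)
qed simp

lemma dominated_by_v: "\<exists>c\<ge>0. \<forall>x\<in>supp. \<bar>f x\<bar> \<le> c * v x"
proof (intro exI conjI ballI)
  show "0 \<le> (\<Sum>y\<in>supp. \<bar>f y\<bar> / v y)" using v_pos by (intro sum_nonneg) (simp add: less_imp_le)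
  fix x assume x: "x \<in> supp"
  have "\<bar>f x\<bar> / v x \<le> (\<Sum>y\<in>supp. \<bar>f y\<bar> / v y)"
    by (rule member_le_sum) (use x v_pos in \<open>auto simp: less_imp_le\<close>)
  then show "\<bar>f x\<bar> \<le> (\<Sum>y\<in>supp. \<bar>f y\<bar> / v y) * v x"
    using v_pos[OF x] by (simp add: field_simps)
qed

lemma abs_funpow_kernel_op_le:
  assumes "x \<in> supp" and "\<forall>y\<in>supp. \<bar>f y\<bar> \<le> c * v y"
  shows "\<bar>(kernel_op M ^^ n) f x\<bar> \<le> c * r ^ n * v x"
proof -
  have "(kernel_op M ^^ n) f x \<le> (kernel_op M ^^ n) (\<lambda>y. c * v y) x"
    using assms by (intro funpow_kernel_op_mono_supp) (auto simp: abs_le_iff)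
  then have upper: "(kernel_op M ^^ n) f x \<le> c * r ^ n * v x"
    unfolding funpow_kernel_op_v[OF assms(1)] .
  have "(kernel_op M ^^ n) (\<lambda>y. (- c) * v y) x \<le> (kernel_op M ^^ n) f x"
    using assms by (intro funpow_kernel_op_mono_supp) (auto simp: abs_le_iff)
  then have lower: "(- c) * r ^ n * v x \<le> (kernel_op M ^^ n) f x"
    unfolding funpow_kernel_op_v[OF assms(1)] .
  from upper lower show ?thesis by (simp add: abs_le_iff)
qed

lemma funpow_kernel_op_one_bounds:
  obtains A B where "0 < A" and "0 < B"
    and "\<And>n x. x \<in> supp \<Longrightarrow> A * r ^ n * v x \<le> (kernel_op M ^^ n) (\<lambda>_. 1) x"
    and "\<And>n x. x \<in> supp \<Longrightarrow> (kernel_op M ^^ n) (\<lambda>_. 1) x \<le> B * r ^ n * v x"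
proof -
  define V where "V = (\<Sum>y\<in>supp. v y)"
  have "0 < V" using supp_nonempty v_pos by (simp add: V_def sum_pos)
  have v_le: "v y \<le> V" if "y \<in> supp" for y
    unfolding V_def by (rule member_le_sum) (use that v_pos in \<open>auto simp: less_imp_le\<close>)
  obtain c where "0 \<le> c" and c: "\<forall>x\<in>supp. \<bar>1::real\<bar> \<le> c * v x"
    using dominated_by_v[of "\<lambda>_. 1"] by blast
  show thesis
  proof (rule that[of "1 / V" "c + 1"])
    show "0 < 1 / V" "0 < c + 1" using \<open>0 < V\<close> \<open>0 \<le> c\<close> by simp_all
    fix n x assume x: "x \<in> supp"
    have "(kernel_op M ^^ n) (\<lambda>y. (1 / V) * v y) x \<le> (kernel_op M ^^ n) (\<lambda>_. 1) x"
      using x v_le \<open>0 < V\<close> by (intro funpow_kernel_op_mono_supp) auto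
    then show "1 / V * r ^ n * v x \<le> (kernel_op M ^^ n) (\<lambda>_. 1) x"
      unfolding funpow_kernel_op_v[OF x] .
    have "(kernel_op M ^^ n) (\<lambda>_. 1) x \<le> c * r ^ n * v x"
      using abs_funpow_kernel_op_le[OF x c, of n] by simp
    also have "\<dots> \<le> (c + 1) * r ^ n * v x"
      using r_pos v_pos[OF x] by (simp add: mult_right_mono)
    finally show "(kernel_op M ^^ n) (\<lambda>_. 1) x \<le> (c + 1) * r ^ n * v x" .
  qed
qed

lemma sum_powr_funpow_kernel_op_one_bounds:
  assumes "0 < p"
  shows "\<exists>A B. 0 < A \<and> 0 < B \<and> (\<forall>n.
    A * (r powr p) ^ n \<le> (\<Sum>x\<in>UNIV. mu x * ((kernel_op M ^^ n) (\<lambda>_. 1) x) powr p) \<and>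
    (\<Sum>x\<in>UNIV. mu x * ((kernel_op M ^^ n) (\<lambda>_. 1) x) powr p) \<le> B * (r powr p) ^ n)"
proof -
  obtain A B where "0 < A" "0 < B"
    and lower: "\<And>n x. x \<in> supp \<Longrightarrow> A * r ^ n * v x \<le> (kernel_op M ^^ n) (\<lambda>_. 1) x"
    and upper: "\<And>n x. x \<in> supp \<Longrightarrow> (kernel_op M ^^ n) (\<lambda>_. 1) x \<le> B * r ^ n * v x"
    using funpow_kernel_op_one_bounds by blast
  define Q where "Q = (\<Sum>x\<in>supp. mu x * v x powr p)"
  have "0 < Q"
    unfolding Q_def
  proof (rule sum_pos)
    fix x assume "x \<in> supp"
    then show "0 < mu x * v x powr p" using v_pos[of x] by (simp add: supp_def)
  qed (use supp_nonempty in auto)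
  have scaled: "(C * r ^ n * v x) powr p = C powr p * (r powr p) ^ n * v x powr p" for C n x
    using r_pos by (simp add: powr_mult power_powr_swap)
  have "A powr p * Q * (r powr p) ^ n \<le> (\<Sum>x\<in>supp. mu x * ((kernel_op M ^^ n) (\<lambda>_. 1) x) powr p) \<and>
    (\<Sum>x\<in>supp. mu x * ((kernel_op M ^^ n) (\<lambda>_. 1) x) powr p) \<le> B powr p * Q * (r powr p) ^ n"
    for n
  proof -
    have pw: "(A * r ^ n * v x) powr p \<le> ((kernel_op M ^^ n) (\<lambda>_. 1) x) powr p"
      "((kernel_op M ^^ n) (\<lambda>_. 1) x) powr p \<le> (B * r ^ n * v x) powr p" if "x \<in> supp" for x
      using lower[OF that] upper[OF that] \<open>0 < A\<close> r_pos v_pos[OF that] assms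
        funpow_kernel_op_nonneg[of M "\<lambda>_. 1", OF M_nonneg]
      by (auto intro!: powr_mono2)
    have "A powr p * Q * (r powr p) ^ n = (\<Sum>x\<in>supp. mu x * (A * r ^ n * v x) powr p)"
      unfolding Q_def scaled by (simp add: sum_distrib_left mult_ac)
    also have "\<dots> \<le> (\<Sum>x\<in>supp. mu x * ((kernel_op M ^^ n) (\<lambda>_. 1) x) powr p)"
      by (intro sum_mono mult_left_mono) (auto simp: mu_nonneg pw)
    finally have "A powr p * Q * (r powr p) ^ n \<le> \<dots>" .
    moreover have "(\<Sum>x\<in>supp. mu x * ((kernel_op M ^^ n) (\<lambda>_. 1) x) powr p)
        \<le> (\<Sum>x\<in>supp. mu x * (B * r ^ n * v x) powr p)"
      by (intro sum_mono mult_left_mono) (auto simp: mu_nonneg pw)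
    moreover have "(\<Sum>x\<in>supp. mu x * (B * r ^ n * v x) powr p) = B powr p * Q * (r powr p) ^ n"
      unfolding Q_def scaled by (simp add: sum_distrib_left mult_ac)
    ultimately show ?thesis by simp
  qed
  then show ?thesis
    using \<open>0 < A\<close> \<open>0 < B\<close> \<open>0 < Q\<close>
    by (intro exI[of _ "A powr p * Q"] exI[of _ "B powr p * Q"]) (simp add: sum_weighted_supp)
qed

lemma tendsto_Lp_rate:
  assumes "0 < p"
  shows "(\<lambda>n. 1 / (real n * p) * ln (\<Sum>x\<in>UNIV. mu x * ((kernel_op M ^^ n) (\<lambda>_. 1) x) powr p))
    \<longlonglongrightarrow> ln r"
proof -
  obtain A B where "0 < A" "0 < B"
    and "\<forall>n. A * (r powr p) ^ n \<le> (\<Sum>x\<in>UNIV. mu x * ((kernel_op M ^^ n) (\<lambda>_. 1) x) powr p) \<and>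
      (\<Sum>x\<in>UNIV. mu x * ((kernel_op M ^^ n) (\<lambda>_. 1) x) powr p) \<le> B * (r powr p) ^ n"
    using sum_powr_funpow_kernel_op_one_bounds[OF assms] by blast
  then have "(\<lambda>n. 1 / real n * ln (\<Sum>x\<in>UNIV. mu x * ((kernel_op M ^^ n) (\<lambda>_. 1) x) powr p))
      \<longlonglongrightarrow> ln (r powr p)"
    using r_pos by (intro tendsto_ln_rate_of_geometric_bounds[of A B]) auto
  then have "(\<lambda>n. 1 / p * (1 / real n * ln (\<Sum>x\<in>UNIV. mu x * ((kernel_op M ^^ n) (\<lambda>_. 1) x) powr p)))
      \<longlonglongrightarrow> 1 / p * ln (r powr p)"
    by (rule tendsto_mult_left)
  then show ?thesis using assms r_pos by (simp add: ln_powr mult_ac)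
qed

lemma tendsto_L_rate:
  "(\<lambda>n. 1 / real n * ln (\<Sum>x\<in>UNIV. mu x * (kernel_op M ^^ n) (\<lambda>_. 1) x)) \<longlonglongrightarrow> ln r"
proof -
  have "(kernel_op M ^^ n) (\<lambda>_. 1) x powr 1 = (kernel_op M ^^ n) (\<lambda>_. 1) x" for n x
    using funpow_kernel_op_nonneg[of M "\<lambda>_. 1", OF M_nonneg] by simp
  then show ?thesis using tendsto_Lp_rate[of 1] by simp
qed

lemma T_iter_zero_le:
  assumes "r < 1" and "0 \<le> c" and b_le: "\<forall>y\<in>supp. b y \<le> c * v y" and "x \<in> supp"
  shows "(T ^^ n) (\<lambda>_. 0) x \<le> c / (1 - r) * v x"
  using assms(4)
proof (induction n arbitrary: x)
  case 0
  then show ?case using assms(1,2) v_pos[of x] by simp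
next
  case (Suc n)
  have "(T ^^ Suc n) (\<lambda>_. 0) x = kernel_op M ((T ^^ n) (\<lambda>_. 0)) x + b x"
    by (simp add: T_def)
  also have "\<dots> \<le> kernel_op M (\<lambda>y. c / (1 - r) * v y) x + c * v x"
    using Suc b_le by (intro add_mono kernel_op_mono_supp) auto
  also have "\<dots> = c / (1 - r) * (r * v x) + c * v x"
    by (simp only: kernel_op_scale v_eigen[OF Suc.prems])
  also have "\<dots> = c / (1 - r) * v x"
    using assms(1) by (simp add: field_simps)
  finally show ?case .
qed

lemma tendsto_fixpoint:
  assumes "r < 1" and "x \<in> supp"
  shows "(\<lambda>n. (T ^^ n) (\<lambda>_. 0) x) \<longlonglongrightarrow> fixpoint x"
proof -
  obtain c where "0 \<le> c" and "\<forall>y\<in>supp. \<bar>b y\<bar> \<le> c * v y" using dominated_by_v by blast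
  then have "bdd_above (range (\<lambda>n. (T ^^ n) (\<lambda>_. 0) x))"
    using T_iter_zero_le[OF assms(1) \<open>0 \<le> c\<close> _ assms(2)] by (intro bdd_aboveI2) force
  then have "(\<lambda>n. (T ^^ n) (\<lambda>_. 0) x) \<longlonglongrightarrow> (SUP n. (T ^^ n) (\<lambda>_. 0) x)"
    by (rule LIMSEQ_incseq_SUP[OF _ incseq_T_iter_zero])
  then show ?thesis unfolding fixpoint_def by (simp add: limI)
qed

lemma fixpoint_nonneg: "r < 1 \<Longrightarrow> x \<in> supp \<Longrightarrow> 0 \<le> fixpoint x"
  using LIMSEQ_le_const[OF tendsto_fixpoint] T_iter_zero_nonneg by blast

lemma T_fixpoint:
  assumes "r < 1" and "x \<in> supp"
  shows "T fixpoint x = fixpoint x"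
proof -
  have "(\<lambda>n. kernel_op M ((T ^^ n) (\<lambda>_. 0)) x + b x) \<longlonglongrightarrow> kernel_op M fixpoint x + b x"
    using assms tendsto_fixpoint[OF assms(1)]
    by (simp add: kernel_op_eq_sum_supp tendsto_add tendsto_sum tendsto_mult_left)
  moreover have "(\<lambda>n. kernel_op M ((T ^^ n) (\<lambda>_. 0)) x + b x) \<longlonglongrightarrow> fixpoint x"
    using LIMSEQ_Suc[OF tendsto_fixpoint[OF assms]] by (simp add: T_def)
  ultimately show ?thesis unfolding T_def by (rule LIMSEQ_unique)
qed

lemma funpow_kernel_op_tendsto_zero:
  assumes "r < 1" and "x \<in> supp"
  shows "(\<lambda>n. (kernel_op M ^^ n) d x) \<longlonglongrightarrow> 0"
proof -
  obtain c where "\<forall>y\<in>supp. \<bar>d y\<bar> \<le> c * v y" using dominated_by_v by blast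
  then have "norm ((kernel_op M ^^ n) d x) \<le> c * v x * r ^ n" for n
    using abs_funpow_kernel_op_le[OF assms(2)] by (simp add: mult_ac)
  moreover have "(\<lambda>n. c * v x * r ^ n) \<longlonglongrightarrow> 0"
    using r_pos assms(1) by (intro tendsto_mult_right_zero LIMSEQ_power_zero) simp
  ultimately show ?thesis by (rule Lim_null_comparison[OF always_eventually[OF allI]])
qed

text \<open>Every orbit differs from the orbit of the fixed point by an orbit of the
  linear part, which decays like r^n.\<close>

lemma T_iter_tendsto_fixpoint:
  assumes "r < 1" and "x \<in> supp"
  shows "(\<lambda>n. (T ^^ n) h x) \<longlonglongrightarrow> fixpoint x"
proof -
  have "(T ^^ n) h x - fixpoint x = (kernel_op M ^^ n) (\<lambda>y. h y - fixpoint y) x" for n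
  proof -
    have "(T ^^ n) fixpoint x = fixpoint x"
      by (rule T_iter_fixed) (use T_fixpoint[OF assms(1)] assms(2) in auto)
    then show ?thesis using T_iter_diff[where f=h and g=fixpoint and n=n and x=x] by linarith
  qed
  then have "(\<lambda>n. (T ^^ n) h x - fixpoint x) \<longlonglongrightarrow> 0"
    using funpow_kernel_op_tendsto_zero[OF assms] by simp
  then show ?thesis by (simp add: LIM_zero_cancel)
qed

definition w_pairing :: "('x \<Rightarrow> real) \<Rightarrow> real" where
  "w_pairing f = (\<Sum>x\<in>supp. w x * f x)"

lemma w_pairing_T: "w_pairing (T f) = r * w_pairing f + w_pairing b"
proof -
  have "w_pairing (kernel_op M f) = (\<Sum>x\<in>supp. w x * (\<Sum>y\<in>supp. M x y * f y))"
    unfolding w_pairing_def by (simp add: kernel_op_eq_sum_supp)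
  also have "\<dots> = (\<Sum>y\<in>supp. \<Sum>x\<in>supp. w x * M x y * f y)"
    by (subst sum.swap) (simp add: sum_distrib_left mult_ac)
  also have "\<dots> = (\<Sum>y\<in>supp. (\<Sum>x\<in>supp. w x * M x y) * f y)"
    by (simp add: sum_distrib_right)
  also have "\<dots> = r * w_pairing f"
    by (simp add: w_eigen w_pairing_def sum_distrib_left mult_ac)
  finally show ?thesis by (simp add: T_def w_pairing_def sum.distrib distrib_left)
qed

lemma w_pairing_b_pos: "0 < w_pairing b"
proof -
  obtain z where z: "z \<in> supp" "0 < b z" using b_pos by blast
  have "0 < w z * b z" using w_pos[OF z(1)] z(2) by simp
  also have "\<dots> \<le> w_pairing b"
    unfolding w_pairing_def by (rule member_le_sum) (use z w_pos b_nonneg in \<open>auto intro!: mult_nonneg_nonneg simp: less_imp_le\<close>)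
  finally show ?thesis .
qed

lemma w_pairing_T_iter_ge:
  assumes "1 \<le> r" and "\<forall>x\<in>supp. 0 \<le> h x"
  shows "real n * w_pairing b \<le> w_pairing ((T ^^ n) h)"
proof (induction n)
  case 0
  then show ?case using assms(2) w_pos by (simp add: w_pairing_def sum_nonneg less_imp_le)
next
  case (Suc n)
  have "0 \<le> real n * w_pairing b" using w_pairing_b_pos by simp
  then have "0 \<le> w_pairing ((T ^^ n) h)" using Suc by linarith
  then have "w_pairing ((T ^^ n) h) \<le> r * w_pairing ((T ^^ n) h)"
    using assms(1) by (simp add: mult_le_cancel_right1)
  then show ?case using Suc by (simp add: w_pairing_T algebra_simps)
qed

lemma not_Lp_tendsto_T_iter:
  assumes "1 \<le> r" and "0 < p" and "Hp_mem mu p h"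
  shows "\<not> Lp_tendsto mu p (\<lambda>n. (T ^^ n) h) h'"
proof
  assume "Lp_tendsto mu p (\<lambda>n. (T ^^ n) h) h'"
  then have "(\<lambda>n. w_pairing ((T ^^ n) h)) \<longlonglongrightarrow> w_pairing h'"
    unfolding w_pairing_def using assms(2)
    by (intro tendsto_sum tendsto_mult_left) (simp add: Lp_tendsto_iff_pointwise)
  then have "Bseq (\<lambda>n. w_pairing ((T ^^ n) h))" by (rule convergent_imp_Bseq[OF convergentI])
  then obtain K where K: "\<And>n. norm (w_pairing ((T ^^ n) h)) \<le> K" by (auto simp: Bseq_def)
  obtain n where "K < real n * w_pairing b" using ex_less_of_nat_mult[OF w_pairing_b_pos] by blast
  also have "\<dots> \<le> w_pairing ((T ^^ n) h)"
    using w_pairing_T_iter_ge[OF assms(1)] assms(3) by (simp add: Hp_mem_iff)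
  finally show False using K[of n] by simp
qed

lemma Markov_sol_fixpoint: "r < 1 \<Longrightarrow> Markov_sol mu p T fixpoint"
  by (simp add: Markov_sol_iff fixpoint_nonneg T_fixpoint)

lemma Markov_sol_unique:
  assumes "r < 1" and "Markov_sol mu p T h"
  shows "ae_eq mu h fixpoint"
  unfolding ae_eq_iff
proof
  fix x assume x: "x \<in> supp"
  have "(\<lambda>n. h x) \<longlonglongrightarrow> fixpoint x"
    using T_iter_tendsto_fixpoint[OF assms(1) x, of h] T_iter_fixed[OF _ x] assms(2)
    by (simp add: Markov_sol_iff)
  then show "h x = fixpoint x" by (simp add: LIMSEQ_const_iff)
qed

lemma Lp_tendsto_fixpoint: "r < 1 \<Longrightarrow> 0 < p \<Longrightarrow> Lp_tendsto mu p (\<lambda>n. (T ^^ n) h) fixpoint"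
  by (simp add: Lp_tendsto_iff_pointwise T_iter_tendsto_fixpoint)

lemma not_Markov_sol: "1 \<le> r \<Longrightarrow> 0 < p \<Longrightarrow> \<not> Markov_sol mu p T h"
  using Markov_sol_Lp_tendsto_self not_Lp_tendsto_T_iter by (auto simp: Markov_sol_def)

lemma Markov_sol_statements_iff:
  assumes "0 < p"
  shows "((\<exists>h. Markov_sol mu p T h) \<longleftrightarrow> r < 1) \<and>
    ((\<exists>h. Markov_sol mu p T h \<and> (\<forall>h'. Markov_sol mu p T h' \<longrightarrow> ae_eq mu h' h)) \<longleftrightarrow> r < 1) \<and>
    ((\<exists>h h'. Hp_mem mu p h \<and> Hp_mem mu p h' \<and> Lp_tendsto mu p (\<lambda>n. (T ^^ n) h) h') \<longleftrightarrow> r < 1) \<and>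
    ((\<exists>hs. Markov_sol mu p T hs \<and> (\<forall>h'. Markov_sol mu p T h' \<longrightarrow> ae_eq mu h' hs) \<and>
        (\<forall>h. Hp_mem mu p h \<longrightarrow> Lp_tendsto mu p (\<lambda>n. (T ^^ n) h) hs)) \<longleftrightarrow> r < 1)"
proof (cases "r < 1")
  case True
  then have "Markov_sol mu p T fixpoint" by (rule Markov_sol_fixpoint)
  moreover from this have "Hp_mem mu p fixpoint" by (simp add: Markov_sol_def)
  ultimately show ?thesis
    using True Markov_sol_unique Lp_tendsto_fixpoint[OF True assms] by blast
next
  case False
  then show ?thesis
    using not_Markov_sol[OF _ assms] not_Lp_tendsto_T_iter[OF _ assms] by auto
qed

end

section \<open>The mean kernel of the chain satisfies the hypotheses\<close>

lemma integral_pos_if_pos_on: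
  fixes f :: "'w \<Rightarrow> real"
  assumes "integrable nu f" and "\<And>\<eta>. 0 \<le> f \<eta>"
    and "A \<in> sets nu" and "0 < measure nu A" and "\<And>\<eta>. \<eta> \<in> A \<Longrightarrow> 0 < f \<eta>"
  shows "0 < integral\<^sup>L nu f"
proof (rule ccontr)
  assume "\<not> 0 < integral\<^sup>L nu f"
  then have "integral\<^sup>L nu f = 0" using assms(2) by (simp add: integral_nonneg_AE order.antisym)
  then have "AE \<eta> in nu. f \<eta> = 0" using integral_nonneg_eq_0_iff_AE[OF assms(1)] assms(2) by simp
  then have "AE \<eta> in nu. \<eta> \<notin> A"
    by eventually_elim (metis assms(5) less_irrefl)
  moreover have "{\<eta> \<in> space nu. \<not> \<eta> \<notin> A} = A"
    using sets.sets_into_space[OF assms(3)] by auto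
  ultimately have "emeasure nu A = 0" by (simp add: AE_iff_measurable[OF assms(3)])
  then show False using assms(4) by (simp add: measure_def)
qed

lemma phibar_pos:
  assumes "prob_space nu" and "integrable nu (phi x y)" and "\<And>\<eta>. 0 < phi x y \<eta>"
  shows "0 < phibar phi nu x y"
  unfolding phibar_def
  by (rule integral_pos_if_pos_on[where A="space nu"])
    (use assms in \<open>auto simp: prob_space.prob_space less_imp_le\<close>)

lemma ex_pos_if_sum_pos: "0 < (\<Sum>x\<in>A. f x :: real) \<Longrightarrow> \<exists>x\<in>A. 0 < f x"
  by (meson not_le sum_nonpos)

lemma Ppow_nonneg: "\<forall>x y. 0 \<le> P x y \<Longrightarrow> 0 \<le> Ppow P n x y"
  by (induction n arbitrary: x) (auto intro!: sum_nonneg)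

lemma Ppow_pos_imp_rtrancl:
  fixes P :: "'x::finite \<Rightarrow> 'x \<Rightarrow> real"
  assumes P_nonneg: "\<forall>x y. 0 \<le> P x y"
    and closed: "\<And>x y. 0 < mu x \<Longrightarrow> 0 < P x y \<Longrightarrow> 0 < mu y"
  shows "0 < Ppow P n x y \<Longrightarrow> 0 < mu x \<Longrightarrow> (x, y) \<in> {(x, y). 0 < mu x \<and> 0 < mu y \<and> 0 < P x y}\<^sup>*"
proof (induction n arbitrary: x)
  case 0
  then show ?case by (simp split: if_splits)
next
  case (Suc n)
  then obtain z where "0 < P x z * Ppow P n z y"
    using ex_pos_if_sum_pos[of "\<lambda>z. P x z * Ppow P n z y" UNIV] by auto
  then have "0 < P x z" and "0 < Ppow P n z y"
    using P_nonneg Ppow_nonneg[OF P_nonneg, of n z y] by (auto simp: zero_less_mult_iff)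
  moreover have "0 < mu z" using closed[OF Suc.prems(2)] \<open>0 < P x z\<close> .
  ultimately show ?case
    using Suc.IH Suc.prems(2) by (auto intro: converse_rtrancl_into_rtrancl)
qed

lemma stationary_positive_closed:
  fixes P :: "'x::finite \<Rightarrow> 'x \<Rightarrow> real"
  assumes "\<forall>x y. 0 \<le> P x y" and "\<forall>x. 0 \<le> mu x" and "\<forall>y. (\<Sum>x\<in>UNIV. mu x * P x y) = mu y"
    and "0 < mu x" and "0 < P x y"
  shows "0 < mu y"
proof -
  have "0 < mu x * P x y" using assms(4,5) by simp
  also have "\<dots> \<le> (\<Sum>z\<in>UNIV. mu z * P z y)"
    by (rule member_le_sum) (use assms(1,2) in auto)
  finally show ?thesis using assms(3) by simp
qed

lemma stationary_positive_pred:
  fixes P :: "'x::finite \<Rightarrow> 'x \<Rightarrow> real"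
  assumes "\<forall>x y. 0 \<le> P x y" and "\<forall>x. 0 \<le> mu x" and "\<forall>y. (\<Sum>x\<in>UNIV. mu x * P x y) = mu y"
    and "0 < mu y"
  shows "\<exists>x. 0 < mu x \<and> 0 < P x y"
proof -
  obtain x where "0 < mu x * P x y"
    using assms(3,4) ex_pos_if_sum_pos[of "\<lambda>x. mu x * P x y" UNIV] by auto
  then show ?thesis
    using assms(1,2) by (auto simp: zero_less_mult_iff not_less[symmetric])
qed

lemma A1_ghat_pos:
  fixes P :: "'x::finite \<Rightarrow> 'x \<Rightarrow> real"
  assumes P_nonneg: "\<forall>x y. 0 \<le> P x y" and pi_nonneg: "\<forall>x. 0 \<le> mu x"
    and phi_nonneg: "\<forall>x y \<eta>. 0 \<le> phi x y \<eta>" and g_nonneg: "\<forall>x y \<eta>. 0 \<le> g x y \<eta>"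
    and g_meas: "\<forall>x y. g x y \<in> borel_measurable nu" and a1: "A1 P mu phi g nu"
    and ghat_fin: "\<forall>x y. 0 < P x y \<longrightarrow> integrable nu (\<lambda>\<eta>. phi x y \<eta> * g x y \<eta>)"
  shows "\<exists>x. 0 < mu x \<and> 0 < ghat P phi g nu x"
proof -
  obtain x y where "0 < mu x * P x y * measure nu {\<eta> \<in> space nu. 0 < g x y \<eta>}"
    using a1 unfolding A1_def by (blast dest: ex_pos_if_sum_pos)
  then have "0 < mu x" and "0 < P x y" and pos: "0 < measure nu {\<eta> \<in> space nu. 0 < g x y \<eta>}"
    using pi_nonneg[rule_format, of x] P_nonneg[rule_format, of x y] measure_nonneg[of nu]
    by (auto simp: zero_less_mult_iff)
  have "0 < (\<integral>\<eta>. phi x y \<eta> * g x y \<eta> \<partial>nu)"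
  proof (rule integral_pos_if_pos_on[OF _ _ _ pos])
    have "g x y \<in> borel_measurable nu" using g_meas by blast
    then show "{\<eta> \<in> space nu. 0 < g x y \<eta>} \<in> sets nu" by measurable
  qed (use ghat_fin \<open>0 < P x y\<close> phi_nonneg g_nonneg a1 in \<open>auto simp: A1_def\<close>)
  then have "0 < (\<integral>\<eta>. phi x y \<eta> * g x y \<eta> \<partial>nu) * P x y" using \<open>0 < P x y\<close> by simp
  also have "\<dots> \<le> ghat P phi g nu x"
    unfolding ghat_def
    by (rule member_le_sum) (use P_nonneg phi_nonneg g_nonneg in \<open>auto intro!: integral_nonneg\<close>)
  finally show ?thesis using \<open>0 < mu x\<close> by blast
qed

lemma affine_kernel_mean_kernel:
  fixes P :: "'x::finite \<Rightarrow> 'x \<Rightarrow> real"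
  assumes nu_prob: "prob_space nu"
    and P_nonneg: "\<forall>x y. 0 \<le> P x y" and P_stoch: "\<forall>x. (\<Sum>y\<in>UNIV. P x y) = 1"
    and pi_nonneg: "\<forall>x. 0 \<le> mu x" and pi_sum: "(\<Sum>x\<in>UNIV. mu x) = 1"
    and pi_stat: "\<forall>y. (\<Sum>x\<in>UNIV. mu x * P x y) = mu y"
    and phi_nonneg: "\<forall>x y \<eta>. 0 \<le> phi x y \<eta>" and g_nonneg: "\<forall>x y \<eta>. 0 \<le> g x y \<eta>"
    and g_meas: "\<forall>x y. g x y \<in> borel_measurable nu"
    and a1: "A1 P mu phi g nu" and a2: "A2 P mu"
    and phibar_fin: "\<forall>x y. integrable nu (phi x y)"
    and ghat_fin: "\<forall>x y. 0 < P x y \<longrightarrow> integrable nu (\<lambda>\<eta>. phi x y \<eta> * g x y \<eta>)"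
  shows "affine_kernel mu (\<lambda>x y. P x y * phibar phi nu x y) (ghat P phi g nu)"
proof -
  have phibar: "0 < phibar phi nu x y" for x y
    by (rule phibar_pos[OF nu_prob]) (use phibar_fin a1 in \<open>auto simp: A1_def\<close>)
  have M_pos_iff: "0 < P x y * phibar phi nu x y \<longleftrightarrow> 0 < P x y" for x y
    using phibar[of x y] by (auto simp: zero_less_mult_iff)
  note closed = stationary_positive_closed[OF P_nonneg pi_nonneg pi_stat]
  show ?thesis
  proof (unfold_locales, unfold M_pos_iff)
    show "0 \<le> P x y * phibar phi nu x y" for x y using P_nonneg phibar[of x y] by simp
    show "0 \<le> ghat P phi g nu x" for x
      unfolding ghat_def using P_nonneg phi_nonneg g_nonneg by (auto intro!: sum_nonneg integral_nonneg)
    show "0 < mu y" if "0 < mu x" "0 < P x y" for x y using closed that .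
    show "\<exists>x. 0 < mu x \<and> 0 < P x y" if "0 < mu y" for y
      by (rule stationary_positive_pred[OF P_nonneg pi_nonneg pi_stat that])
    show "\<exists>y. 0 < mu y \<and> 0 < P x y" if x: "0 < mu x" for x
    proof -
      obtain y where "0 < P x y" using P_stoch ex_pos_if_sum_pos[of "P x" UNIV] by auto
      then show ?thesis using closed[OF x] by blast
    qed
    show "(x, y) \<in> {(x, y). 0 < mu x \<and> 0 < mu y \<and> 0 < P x y}\<^sup>*" if xy: "0 < mu x" "0 < mu y" for x y
    proof -
      have "0 < (\<Sum>z\<in>{y}. mu z)" using xy by simp
      then obtain n where "0 < (\<Sum>z\<in>{y}. Ppow P n x z)" using a2 unfolding A2_def by blast
      then show ?thesis using Ppow_pos_imp_rtrancl[OF P_nonneg closed] xy by simp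
    qed
    show "\<exists>x. 0 < mu x \<and> 0 < ghat P phi g nu x"
      by (rule A1_ghat_pos[OF P_nonneg pi_nonneg phi_nonneg g_nonneg g_meas a1 ghat_fin])
  qed (use pi_nonneg pi_sum in auto)
qed

theorem mainTheorem2:
  fixes P :: "'x::finite \<Rightarrow> 'x \<Rightarrow> real"
    and mu :: "'x \<Rightarrow> real"
    and nu :: "'w::polish_space measure"
    and phi g :: "'x \<Rightarrow> 'x \<Rightarrow> 'w \<Rightarrow> real"
  assumes nu_prob: "prob_space nu"
    and nu_borel: "sets nu = sets borel"
    and P_nonneg: "\<forall>x y. P x y \<ge> 0"
    and P_stoch: "\<forall>x. (\<Sum>y\<in>UNIV. P x y) = 1"
    and pi_nonneg: "\<forall>x. mu x \<ge> 0"
    and pi_sum: "(\<Sum>x\<in>UNIV. mu x) = 1"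
    and pi_stat: "\<forall>y. (\<Sum>x\<in>UNIV. mu x * P x y) = mu y"
    and phi_nonneg: "\<forall>x y \<eta>. phi x y \<eta> \<ge> 0"
    and g_nonneg: "\<forall>x y \<eta>. g x y \<eta> \<ge> 0"
    and phi_meas: "\<forall>x y. phi x y \<in> borel_measurable nu"
    and g_meas: "\<forall>x y. g x y \<in> borel_measurable nu"
    and a1: "A1 P mu phi g nu"
    and a2: "A2 P mu"
    and phibar_fin: "\<forall>x y. integrable nu (phi x y)"
    and ghat_fin: "\<forall>x y. P x y > 0 \<longrightarrow> integrable nu (\<lambda>\<eta>. phi x y \<eta> * g x y \<eta>)"
  shows "(\<forall>p\<ge>1. A3 mu p (Vop P phi nu) (ghat P phi g nu)) \<and>
    (\<exists>L::real. L_seq P mu phi nu \<longlonglongrightarrow> L \<and>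
       (\<forall>p\<ge>1. Lp_seq P mu phi nu p \<longlonglongrightarrow> L) \<and>
       (\<forall>p\<ge>1.
          ((\<exists>h. Markov_sol mu p (Top P phi g nu) h) \<longleftrightarrow> L < 0) \<and>
          ((\<exists>h. Markov_sol mu p (Top P phi g nu) h \<and>
              (\<forall>h'. Markov_sol mu p (Top P phi g nu) h' \<longrightarrow> ae_eq mu h' h)) \<longleftrightarrow> L < 0) \<and>
          ((\<exists>h h'. Hp_mem mu p h \<and> Hp_mem mu p h' \<and>
              Lp_tendsto mu p (\<lambda>n. (Top P phi g nu ^^ n) h) h') \<longleftrightarrow> L < 0) \<and>
          ((\<exists>hs. Markov_sol mu p (Top P phi g nu) hs \<and>
              (\<forall>h'. Markov_sol mu p (Top P phi g nu) h' \<longrightarrow> ae_eq mu h' hs) \<and>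
              (\<forall>h. Hp_mem mu p h \<longrightarrow> Lp_tendsto mu p (\<lambda>n. (Top P phi g nu ^^ n) h) hs)) \<longleftrightarrow> L < 0)))"
proof -
  interpret affine_kernel mu "\<lambda>x y. P x y * phibar phi nu x y" "ghat P phi g nu"
    by (rule affine_kernel_mean_kernel[OF nu_prob P_nonneg P_stoch pi_nonneg pi_sum pi_stat
      phi_nonneg g_nonneg g_meas a1 a2 phibar_fin ghat_fin])
  obtain r v w where "perron_affine_kernel mu (\<lambda>x y. P x y * phibar phi nu x y) (ghat P phi g nu) r v w"
    using perron_affine_kernel_exists by blast
  then interpret perron_affine_kernel mu "\<lambda>x y. P x y * phibar phi nu x y" "ghat P phi g nu" r v w .
  have Top_eq: "Top P phi g nu = T"
    by (simp add: fun_eq_iff Top_def T_def Vop_eq_kernel_op)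
  have Ex_prod_eq: "Ex_prod P phi nu x n = (kernel_op (\<lambda>x y. P x y * phibar phi nu x y) ^^ n) (\<lambda>_. 1) x"
    for x n by (rule Ex_prod_eq_funpow[OF nu_prob phibar_fin])
  have "L_seq P mu phi nu \<longlonglongrightarrow> ln r"
    using tendsto_L_rate by (simp add: L_seq_def[abs_def] Ex_prod_eq)
  moreover have "Lp_seq P mu phi nu p \<longlonglongrightarrow> ln r" if "1 \<le> p" for p
    using tendsto_Lp_rate[of p] that by (simp add: Lp_seq_def[abs_def] Ex_prod_eq integral_piM pi_nonneg)
  moreover have "ln r < 0 \<longleftrightarrow> r < 1" using r_pos by simp
  ultimately show ?thesis
    using A3_kernel_op Markov_sol_statements_iff unfolding Vop_eq_kernel_op Top_eq by auto
qed

end
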